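(* Let $n=2k+1$ be odd with $k\ge1$, $\theta=\frac{2\pi}{n+2}$, and for $L>0$ let $\mathcal{N}^{(L)}=\{(\ell_j,r_j): j\in[1:n]\}$ be given by $\ell_1=1$, $r_1=L$, and $$\ell_{2i}=\ell_{2i+1}=\frac{\sin(i\theta)+\sin((i+1)\theta)}{\sin((i+1)\theta)},\qquad r_{2i}=r_{2i+1}=\frac{\sin(i\theta)+\sin((i+1)\theta)}{\sin(i\theta)},\qquad i\in[1:k].$$ Then $\mathsf{C}_1(\mathcal{N}_j)=1$ for all $j\in[2:n]$, $\mathsf{C}_1(\mathcal{N}^{(L)})=1$ for every $L>0$, $\mathsf{C}_n(\mathcal{N}^{(L)})\le\ell_n=2+2\cos\theta$ for every $L>0$, and $\lim_{L\to\infty}\mathsf{C}_n(\mathcal{N}^{(L)})=2+2\cos\theta$. Hence $\lim_{L\to\infty}\frac{\mathsf{C}_1(\mathcal{N}^{(L)})}{\mathsf{C}_n(\mathcal{N}^{(L)})}=\frac{1}{2+2\cos\left(\frac{2\pi}{n+2}\right)}$.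
   Context: For a network $\mathcal{N}=\{(\ell_i,r_i): i\in[1:n]\}$ with nonnegative link capacities, with complements inside $[1:n]$ and maxima over empty sets equal to $0$, the approximate capacity is $\mathsf{C}_n(\mathcal{N})=\max_{\boldsymbol\lambda}\min_{\Omega\subseteq[1:n]}\sum_{\mathcal{S}\subseteq[1:n]}\lambda_{\mathcal{S}}\big(\max_{i\in\mathcal{S}^c\cap\Omega^c}\ell_i+\max_{i\in\mathcal{S}\cap\Omega}r_i\big)$, the maximum being over schedules $\boldsymbol\lambda=(\lambda_{\mathcal{S}})_{\mathcal{S}\subseteq[1:n]}$, $\lambda_{\mathcal{S}}\ge0$, $\sum_{\mathcal{S}}\lambda_{\mathcal{S}}=1$. $\mathsf{C}_1(\mathcal{N}_i)=\frac{\ell_ir_i}{\ell_i+r_i}$ and $\mathsf{C}_1(\mathcal{N})=\max_i\mathsf{C}_1(\mathcal{N}_i)$. *)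

theory Defs
  imports "HOL-Analysis.Analysis"
begin

text \<open>A network on [1:n] is given by link capacities l, r :: nat => real (indices 1..n).\<close>

definition maxOn :: "(nat \<Rightarrow> real) \<Rightarrow> nat set \<Rightarrow> real" where
  "maxOn f A = (if A = {} then 0 else Max (f ` A))"

definition schedule :: "nat \<Rightarrow> (nat set \<Rightarrow> real) \<Rightarrow> bool" where
  "schedule n lam \<longleftrightarrow> (\<forall>S\<in>Pow {1..n}. lam S \<ge> 0) \<and> (\<Sum>S\<in>Pow {1..n}. lam S) = 1"

definition cutValue :: "nat \<Rightarrow> (nat \<Rightarrow> real) \<Rightarrow> (nat \<Rightarrow> real) \<Rightarrow> (nat set \<Rightarrow> real) \<Rightarrow> real" where
  "cutValue n l r lam = Min ((\<lambda>\<Omega>. \<Sum>S\<in>Pow {1..n}. lam S *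
       (maxOn l (({1..n} - S) \<inter> ({1..n} - \<Omega>)) + maxOn r (S \<inter> \<Omega>))) ` Pow {1..n})"

text \<open>Approximate capacity C_n (the max over schedules, written as a supremum).\<close>
definition capN :: "nat \<Rightarrow> (nat \<Rightarrow> real) \<Rightarrow> (nat \<Rightarrow> real) \<Rightarrow> real" where
  "capN n l r = (SUP lam \<in> {lam. schedule n lam}. cutValue n l r lam)"

definition cap1Link :: "real \<Rightarrow> real \<Rightarrow> real" where
  "cap1Link a b = a * b / (a + b)"

definition cap1 :: "nat \<Rightarrow> (nat \<Rightarrow> real) \<Rightarrow> (nat \<Rightarrow> real) \<Rightarrow> real" where
  "cap1 n l r = Max ((\<lambda>i. cap1Link (l i) (r i)) ` {1..n})"

end

theory Submission
  imports Defs
begin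

text \<open>
  Upper bound: the cut \<Omega> = {} costs every schedule at most the largest l j, and every l j is
  at most c = l n = 2 + 2 cos \<theta>.
  Lower bound: give time \<epsilon> to the state {1} and (1 - \<epsilon>)/2 to each of the states
  {2, 4, ..., 2k} and {3, 5, ..., 2k+1}.  A cut containing node 1 pays \<epsilon> L.  A cut avoiding
  node 1 pays at least c along each of the alternating chains 1, 2, 4, ... and 1, 3, 5, ...:
  the last node of a chain outside the cut and its successor inside are paid in different
  states, and l (2j) + r (2j+2) = 2 + 2 cos \<theta> by sin (j\<theta>) + sin ((j+2)\<theta>) =
  2 cos \<theta> sin ((j+1)\<theta>), while the chain end l n = 2 + 2 cos \<theta> since
  (k+2)\<theta> = 2\<pi> - (k+1)\<theta>.  With \<epsilon> = c/L this gives (1 - c/L) c \<le> C_n \<le> c.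
\<close>

lemma maxOn_ge: "finite A \<Longrightarrow> x \<in> A \<Longrightarrow> f x \<le> maxOn f A"
  unfolding maxOn_def by auto

lemma maxOn_nonneg: "finite A \<Longrightarrow> (\<And>x. x \<in> A \<Longrightarrow> 0 \<le> f x) \<Longrightarrow> 0 \<le> maxOn f A"
  unfolding maxOn_def by (auto simp: Max_ge_iff)

lemma maxOn_le: "finite A \<Longrightarrow> (\<And>x. x \<in> A \<Longrightarrow> f x \<le> c) \<Longrightarrow> 0 \<le> c \<Longrightarrow> maxOn f A \<le> c"
  unfolding maxOn_def by auto

definition cutTerm :: "nat \<Rightarrow> (nat \<Rightarrow> real) \<Rightarrow> (nat \<Rightarrow> real) \<Rightarrow> nat set \<Rightarrow> nat set \<Rightarrow> real" where
  "cutTerm n l r \<Omega> S = maxOn l (({1..n} - S) \<inter> ({1..n} - \<Omega>)) + maxOn r (S \<inter> \<Omega>)"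

lemma cutValue_eq_Min:
  "cutValue n l r lam = Min ((\<lambda>\<Omega>. \<Sum>S\<in>Pow {1..n}. lam S * cutTerm n l r \<Omega> S) ` Pow {1..n})"
  unfolding cutValue_def cutTerm_def ..

lemma cutValue_ge:
  assumes "\<And>\<Omega>. \<Omega> \<subseteq> {1..n} \<Longrightarrow> b \<le> (\<Sum>S\<in>Pow {1..n}. lam S * cutTerm n l r \<Omega> S)"
  shows "b \<le> cutValue n l r lam"
  unfolding cutValue_eq_Min using assms by (subst Min_ge_iff) auto

lemma cutTerm_nonneg:
  assumes "S \<subseteq> {1..n}" "\<And>j. j \<in> {1..n} \<Longrightarrow> 0 \<le> l j \<and> 0 \<le> r j"
  shows "0 \<le> cutTerm n l r \<Omega> S"
  unfolding cutTerm_def using assms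
  by (intro add_nonneg_nonneg maxOn_nonneg) (auto intro: finite_subset[OF _ finite_atLeastAtMost])

lemma cutTerm_ge:
  assumes "S \<subseteq> {1..n}" "w \<in> {1..n} - S - \<Omega>" "\<And>j. j \<in> S \<Longrightarrow> 0 \<le> r j" "b \<Longrightarrow> v \<in> S \<inter> \<Omega>"
  shows "l w + (if b then r v else 0) \<le> cutTerm n l r \<Omega> S"
proof -
  have fin: "finite (S \<inter> \<Omega>)" using assms(1) by (auto intro: finite_subset)
  have "l w \<le> maxOn l (({1..n} - S) \<inter> ({1..n} - \<Omega>))"
    using assms(2) by (intro maxOn_ge) auto
  moreover have "(if b then r v else 0) \<le> maxOn r (S \<inter> \<Omega>)"
    using assms(3,4) fin by (auto intro: maxOn_ge maxOn_nonneg)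
  ultimately show ?thesis unfolding cutTerm_def by linarith
qed

lemma schedule_point: "S \<subseteq> {1..n} \<Longrightarrow> schedule n (\<lambda>T. if T = S then 1 else 0)"
  unfolding schedule_def by auto

lemma cutValue_le:
  assumes "schedule n lam" "\<And>j. j \<in> {1..n} \<Longrightarrow> l j \<le> c" "0 \<le> c"
  shows "cutValue n l r lam \<le> c"
proof -
  have "cutValue n l r lam \<le> (\<Sum>S\<in>Pow {1..n}. lam S * cutTerm n l r {} S)"
    unfolding cutValue_eq_Min by (rule Min_le) auto
  also have "\<dots> \<le> (\<Sum>S\<in>Pow {1..n}. lam S * c)"
  proof (rule sum_mono)
    fix S assume "S \<in> Pow {1..n}"
    then have "0 \<le> lam S" using assms(1) unfolding schedule_def by auto
    moreover have "cutTerm n l r {} S \<le> c"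
      unfolding cutTerm_def maxOn_def[of r] using assms(2,3) by (auto intro: maxOn_le)
    ultimately show "lam S * cutTerm n l r {} S \<le> lam S * c" by (rule mult_left_mono[rotated])
  qed
  also have "\<dots> = c" using assms(1) unfolding schedule_def by (simp add: sum_distrib_right[symmetric])
  finally show ?thesis .
qed

lemma capN_le:
  assumes "\<And>j. j \<in> {1..n} \<Longrightarrow> l j \<le> c" "0 \<le> c"
  shows "capN n l r \<le> c"
  unfolding capN_def
proof (rule cSUP_least)
  show "{lam. schedule n lam} \<noteq> {}" using schedule_point[of "{}" n] by auto
qed (use cutValue_le assms in auto)

lemma cutValue_le_capN:
  assumes "schedule n lam" "\<And>j. j \<in> {1..n} \<Longrightarrow> l j \<le> c" "0 \<le> c"
  shows "cutValue n l r lam \<le> capN n l r"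
  unfolding capN_def
  by (rule cSUP_upper) (use assms cutValue_le in \<open>auto intro!: bdd_aboveI2[where M=c]\<close>)

definition evenNodes :: "nat \<Rightarrow> nat set" where
  "evenNodes k = (\<lambda>i. 2*i) ` {1..k}"

definition oddNodes :: "nat \<Rightarrow> nat set" where
  "oddNodes k = (\<lambda>i. 2*i+1) ` {1..k}"

definition zigzagSchedule :: "nat \<Rightarrow> real \<Rightarrow> nat set \<Rightarrow> real" where
  "zigzagSchedule k \<epsilon> S =
     (if S = {1} then \<epsilon> else if S = evenNodes k \<or> S = oddNodes k then (1 - \<epsilon>) / 2 else 0)"

lemma mem_evenNodes: "x \<in> evenNodes k \<longleftrightarrow> even x \<and> 2 \<le> x \<and> x \<le> 2*k"
  unfolding evenNodes_def by (auto elim!: evenE)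

lemma mem_oddNodes: "x \<in> oddNodes k \<longleftrightarrow> odd x \<and> 3 \<le> x \<and> x \<le> 2*k+1"
  unfolding oddNodes_def by (auto elim!: oddE)

lemma evenNodes_subset: "evenNodes k \<subseteq> {1..2*k+1}"
  by (auto simp: mem_evenNodes)

lemma oddNodes_subset: "oddNodes k \<subseteq> {1..2*k+1}"
  by (auto simp: mem_oddNodes)

lemma node_cases: "(j::nat) \<in> {1..2*k+1} \<Longrightarrow> j = 1 \<or> (\<exists>i\<in>{1..k}. j = 2*i \<or> j = 2*i+1)"
proof (cases "j = 1")
  case False
  assume "j \<in> {1..2*k+1}"
  with False have "j div 2 \<in> {1..k}" "j = 2 * (j div 2) \<or> j = 2 * (j div 2) + 1" by auto
  then show ?thesis by blast
qed simp

lemma sum_zigzagSchedule: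
  assumes "1 \<le> k"
  shows "(\<Sum>S\<in>Pow {1..2*k+1}. zigzagSchedule k \<epsilon> S * f S)
           = \<epsilon> * f {1} + (1 - \<epsilon>) / 2 * f (evenNodes k) + (1 - \<epsilon>) / 2 * f (oddNodes k)"
proof -
  have "2 \<in> evenNodes k" "3 \<in> oddNodes k" "2 \<notin> oddNodes k"
    using assms by (simp_all add: mem_evenNodes mem_oddNodes)
  then have distinct: "evenNodes k \<noteq> {1}" "oddNodes k \<noteq> {1}" "evenNodes k \<noteq> oddNodes k"
    by (metis numeral_eq_one_iff semiring_norm(85,86) singletonD)+
  have "{{1}, evenNodes k, oddNodes k} \<subseteq> Pow {1..2*k+1}"
    using evenNodes_subset oddNodes_subset by auto
  then have "(\<Sum>S\<in>Pow {1..2*k+1}. zigzagSchedule k \<epsilon> S * f S)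
               = (\<Sum>S\<in>{{1}, evenNodes k, oddNodes k}. zigzagSchedule k \<epsilon> S * f S)"
    by (intro sum.mono_neutral_right) (auto simp: zigzagSchedule_def)
  then show ?thesis using distinct by (simp add: zigzagSchedule_def)
qed

lemma schedule_zigzagSchedule:
  "1 \<le> k \<Longrightarrow> 0 \<le> \<epsilon> \<Longrightarrow> \<epsilon> \<le> 1 \<Longrightarrow> schedule (2*k+1) (zigzagSchedule k \<epsilon>)"
  using sum_zigzagSchedule[of k \<epsilon> "\<lambda>_. 1"] unfolding schedule_def zigzagSchedule_def by auto

lemma ex_boundary_le: "P 0 \<Longrightarrow> \<exists>j\<le>k. P j \<and> (j < k \<longrightarrow> \<not> P (Suc j))"
proof (induction k)
  case (Suc k)
  then obtain j where "j \<le> k" "P j" "j < k \<longrightarrow> \<not> P (Suc j)" by blast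
  then show ?case by (cases "j < k \<or> \<not> P (Suc k)") (auto intro: le_SucI)
qed auto

locale zigzag_network =
  fixes k :: nat and lp rp :: "nat \<Rightarrow> real" and c :: real and l r :: "nat \<Rightarrow> real"
  assumes k_ge_1: "1 \<le> k"
    and l_1: "l 1 = lp 0" and r_1_nonneg: "0 \<le> r 1"
    and pairs: "\<And>i. i \<in> {1..k} \<Longrightarrow>
        l (2*i) = lp i \<and> l (2*i+1) = lp i \<and> r (2*i) = rp i \<and> r (2*i+1) = rp i"
    and lp_nonneg: "\<And>i. i \<le> k \<Longrightarrow> 0 \<le> lp i"
    and rp_nonneg: "\<And>i. i \<in> {1..k} \<Longrightarrow> 0 \<le> rp i"
    and chain: "\<And>j. j < k \<Longrightarrow> lp j + rp (Suc j) = c"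
    and chain_end: "lp k = c"
begin

lemma nonneg: "j \<in> {1..2*k+1} \<Longrightarrow> 0 \<le> l j \<and> 0 \<le> r j"
  using node_cases[of j k] l_1 r_1_nonneg pairs lp_nonneg rp_nonneg by fastforce

lemma c_nonneg: "0 \<le> c"
  using chain_end lp_nonneg by force

lemma l_le_c: "j \<in> {1..2*k+1} \<Longrightarrow> l j \<le> c"
  using node_cases[of j k]
proof
  assume "j = 1"
  then show ?thesis using l_1 chain[of 0] rp_nonneg[of 1] k_ge_1 by auto
next
  assume "\<exists>i\<in>{1..k}. j = 2*i \<or> j = 2*i+1"
  then obtain i where i: "i \<in> {1..k}" "j = 2*i \<or> j = 2*i+1" by blast
  have "lp i \<le> c"
    using chain[of i] rp_nonneg[of "Suc i"] chain_end i(1) by (cases "i < k") auto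
  then show ?thesis using pairs i by auto
qed

text \<open>Follow the chain 1, 3, 5, ... up to its last node 2j+1 outside \<Omega> (and likewise the
  chain 1, 2, 4, ... up to j'): lp j is paid in the even state, and the successor 2j+3 \<in> \<Omega>
  contributes rp (j+1) in the odd state, so each chain pays lp j + rp (j+1) = c.\<close>
lemma cutTerm_even_add_odd_ge:
  assumes "1 \<notin> \<Omega>"
  shows "2 * c \<le> cutTerm (2*k+1) l r \<Omega> (evenNodes k) + cutTerm (2*k+1) l r \<Omega> (oddNodes k)"
proof -
  obtain j where j: "j \<le> k" "2*j+1 \<notin> \<Omega>" "j < k \<Longrightarrow> 2*(j+1)+1 \<in> \<Omega>"
    using ex_boundary_le[of "\<lambda>i. 2*i+1 \<notin> \<Omega>" k] assms by auto
  obtain j' where j': "j' \<le> k" "j' = 0 \<or> 2*j' \<notin> \<Omega>" "j' < k \<Longrightarrow> 2*(j'+1) \<in> \<Omega>"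
    using ex_boundary_le[of "\<lambda>i. i = 0 \<or> 2*i \<notin> \<Omega>" k] by auto
  have chain_sum: "lp i + (if i < k then rp (i+1) else 0) = c" if "i \<le> k" for i
    using chain chain_end that by auto
  have "lp j + (if j' < k then r (2*(j'+1)) else 0) \<le> cutTerm (2*k+1) l r \<Omega> (evenNodes k)"
  proof -
    have "l (2*j+1) = lp j" using l_1 pairs[of j] j(1) by (cases "j = 0") auto
    then show ?thesis
      using cutTerm_ge[OF evenNodes_subset[of k], of "2*j+1" \<Omega> r "j' < k" "2*(j'+1)" l] j j' nonneg evenNodes_subset
      by (auto simp: mem_evenNodes)
  qed
  moreover have "lp j' + (if j < k then r (2*(j+1)+1) else 0) \<le> cutTerm (2*k+1) l r \<Omega> (oddNodes k)"
  proof -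
    define w where "w = (if j' = 0 then 1 else 2*j')"
    have "l w = lp j'" using l_1 pairs[of j'] j'(1) unfolding w_def by auto
    then show ?thesis
      using cutTerm_ge[OF oddNodes_subset[of k], of w \<Omega> r "j < k" "2*(j+1)+1" l] j j' nonneg oddNodes_subset assms
      by (auto simp: mem_oddNodes w_def)
  qed
  moreover have "r (2*(i+1)) = rp (i+1)" "r (2*(i+1)+1) = rp (i+1)" if "i < k" for i
    using pairs[of "i+1"] that by auto
  ultimately show ?thesis using chain_sum[OF j(1)] chain_sum[OF j'(1)] by (auto split: if_splits)
qed

lemma cutValue_zigzagSchedule_ge:
  assumes "0 \<le> \<epsilon>" "\<epsilon> \<le> 1"
  shows "min (\<epsilon> * r 1) ((1 - \<epsilon>) * c) \<le> cutValue (2*k+1) l r (zigzagSchedule k \<epsilon>)"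
proof (rule cutValue_ge)
  fix \<Omega> :: "nat set"
  let ?t = "cutTerm (2*k+1) l r \<Omega>"
  have t_nonneg: "0 \<le> ?t S" if "S \<subseteq> {1..2*k+1}" for S
    using cutTerm_nonneg[OF that nonneg] .
  have "min (\<epsilon> * r 1) ((1 - \<epsilon>) * c)
          \<le> \<epsilon> * ?t {1} + (1 - \<epsilon>) / 2 * (?t (evenNodes k) + ?t (oddNodes k))"
  proof (cases "1 \<in> \<Omega>")
    case True
    have "r 1 \<le> ?t {1}"
      unfolding cutTerm_def using True nonneg
      by (intro add_increasing maxOn_nonneg maxOn_ge) auto
    then have "\<epsilon> * r 1 \<le> \<epsilon> * ?t {1}" using assms(1) by (rule mult_left_mono)
    moreover have "0 \<le> (1 - \<epsilon>) / 2 * (?t (evenNodes k) + ?t (oddNodes k))"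
      using assms(2) t_nonneg evenNodes_subset oddNodes_subset by simp
    ultimately show ?thesis by linarith
  next
    case False
    have "(1 - \<epsilon>) / 2 * (2 * c) \<le> (1 - \<epsilon>) / 2 * (?t (evenNodes k) + ?t (oddNodes k))"
      using cutTerm_even_add_odd_ge[OF False] assms(2) by (intro mult_left_mono) auto
    moreover have "0 \<le> \<epsilon> * ?t {1}" using assms(1) t_nonneg[of "{1}"] by simp
    ultimately show ?thesis by simp
  qed
  then show "min (\<epsilon> * r 1) ((1 - \<epsilon>) * c) \<le> (\<Sum>S\<in>Pow {1..2*k+1}. zigzagSchedule k \<epsilon> S * ?t S)"
    unfolding sum_zigzagSchedule[OF k_ge_1] by (simp add: distrib_left add.assoc)
qed

lemma capN_le_c: "capN (2*k+1) l r \<le> c"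
  using capN_le l_le_c c_nonneg by blast

lemma capN_ge:
  assumes "c \<le> r 1"
  shows "(1 - c / r 1) * c \<le> capN (2*k+1) l r"
proof -
  define \<epsilon> where "\<epsilon> = c / r 1"
  have \<epsilon>: "0 \<le> \<epsilon>" "\<epsilon> \<le> 1" "\<epsilon> * r 1 = c"
    using assms c_nonneg unfolding \<epsilon>_def by (auto simp: divide_le_eq_1)
  have "(1 - \<epsilon>) * c \<le> min (\<epsilon> * r 1) ((1 - \<epsilon>) * c)"
    using \<epsilon> c_nonneg by (simp add: mult_le_cancel_right2)
  also have "\<dots> \<le> cutValue (2*k+1) l r (zigzagSchedule k \<epsilon>)"
    using cutValue_zigzagSchedule_ge \<epsilon> by blast
  also have "\<dots> \<le> capN (2*k+1) l r"
    using cutValue_le_capN schedule_zigzagSchedule k_ge_1 \<epsilon> l_le_c c_nonneg by blast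
  finally show ?thesis unfolding \<epsilon>_def .
qed

end

lemma tendsto_capN_zigzag:
  assumes "\<And>L. 0 < L \<Longrightarrow> zigzag_network k lp rp c l (r L)" "\<And>L. 0 < L \<Longrightarrow> r L 1 = L"
  shows "((\<lambda>L. capN (2*k+1) l (r L)) \<longlongrightarrow> c) at_top"
proof (rule tendsto_sandwich)
  show "\<forall>\<^sub>F L in at_top. (1 - c / L) * c \<le> capN (2*k+1) l (r L)"
    using eventually_ge_at_top[of "max c 1"]
    by eventually_elim (use zigzag_network.capN_ge[OF assms(1)] assms(2) in force)
  show "\<forall>\<^sub>F L in at_top. capN (2*k+1) l (r L) \<le> c"
    using eventually_gt_at_top[of 0] by eventually_elim (use zigzag_network.capN_le_c assms(1) in blast)
  have "((\<lambda>L. (1 - c / L) * c) \<longlongrightarrow> (1 - 0) * c) at_top"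
    by (intro tendsto_intros tendsto_divide_0[OF tendsto_const] filterlim_at_top_imp_at_infinity filterlim_ident)
  then show "((\<lambda>L. (1 - c / L) * c) \<longlongrightarrow> c) at_top" by simp
qed simp

lemma cap1_eq_1:
  assumes "2 \<le> n" "\<And>j. j \<in> {2..n} \<Longrightarrow> cap1Link (l j) (r j) = 1" "cap1Link (l 1) (r 1) \<le> 1"
  shows "cap1 n l r = 1"
  unfolding cap1_def
proof (rule Max_eqI)
  show "1 \<in> (\<lambda>j. cap1Link (l j) (r j)) ` {1..n}" using assms(1,2) by force
  fix y assume "y \<in> (\<lambda>j. cap1Link (l j) (r j)) ` {1..n}"
  then obtain j where "j \<in> {1..n}" "y = cap1Link (l j) (r j)" by blast
  then show "y \<le> 1" using assms by (cases "j = 1") auto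
qed simp

definition sine_l :: "real \<Rightarrow> nat \<Rightarrow> real" where
  "sine_l \<theta> i = (sin (real i * \<theta>) + sin ((real i + 1) * \<theta>)) / sin ((real i + 1) * \<theta>)"

definition sine_r :: "real \<Rightarrow> nat \<Rightarrow> real" where
  "sine_r \<theta> i = (sin (real i * \<theta>) + sin ((real i + 1) * \<theta>)) / sin (real i * \<theta>)"

lemma cap1Link_sum_div:
  fixes p q :: real
  assumes "0 < p" "0 < q"
  shows "cap1Link ((p + q) / q) ((p + q) / p) = 1"
proof -
  have sum_eq_prod: "(p + q) / q + (p + q) / p = (p + q) / q * ((p + q) / p)"
    using assms by (simp add: field_simps)
  have "(p + q) / q * ((p + q) / p) \<noteq> 0" using assms by simp
  then show ?thesis unfolding cap1Link_def sum_eq_prod by simp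
qed

lemma sin_diff_add_sin_add: "sin (x - \<theta>) + sin (x + \<theta>) = 2 * cos \<theta> * sin (x::real)"
  by (simp add: sin_diff sin_add)

lemma sine_l_add_sine_r_Suc:
  assumes "sin ((real j + 1) * \<theta>) \<noteq> 0"
  shows "sine_l \<theta> j + sine_r \<theta> (Suc j) = 2 + 2 * cos \<theta>"
proof -
  define x where "x = (real j + 1) * \<theta>"
  have "real j * \<theta> = x - \<theta>" "(real (Suc j) + 1) * \<theta> = x + \<theta>"
    unfolding x_def by (simp_all add: algebra_simps)
  then have "sine_l \<theta> j + sine_r \<theta> (Suc j) = (sin (x - \<theta>) + sin (x + \<theta>)) / sin x + 2"
    using assms unfolding sine_l_def sine_r_def x_def by (simp add: field_simps)
  then show ?thesis using assms unfolding sin_diff_add_sin_add x_def by simp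
qed

lemma sine_l_0: "sin \<theta> \<noteq> 0 \<Longrightarrow> sine_l \<theta> 0 = 1"
  unfolding sine_l_def by simp

context
  fixes k :: nat and \<theta> :: real
  assumes \<theta>: "\<theta> = 2 * pi / (2 * real k + 3)"
begin

lemma sin_multiple_pos:
  assumes "1 \<le> i" "i \<le> k + 1"
  shows "0 < sin (i*\<theta>)"
proof (rule sin_gt_zero)
  show "0 < i*\<theta>" using assms \<theta> by simp
  have "i*\<theta> = pi * (2 * i / (2 * k + 3))" using \<theta> by simp
  moreover have "2 * i / (2 * k + 3) < (1::real)" using assms by (simp add: field_simps)
  ultimately show "i*\<theta> < pi" by (metis mult.right_neutral mult_strict_left_mono pi_gt_zero)
qed

lemma sin_succ_multiple_pos: "i \<le> k \<Longrightarrow> 0 < sin ((real i + 1) * \<theta>)"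
  using sin_multiple_pos[of "Suc i"] by (simp add: add.commute)

lemma sine_l_pos: "i \<le> k \<Longrightarrow> 0 < sine_l \<theta> i"
  unfolding sine_l_def using sin_multiple_pos[of i] sin_succ_multiple_pos[of i]
  by (cases "i = 0") (auto intro!: divide_pos_pos add_pos_pos)

lemma sine_r_pos: "i \<in> {1..k} \<Longrightarrow> 0 < sine_r \<theta> i"
  unfolding sine_r_def using sin_multiple_pos[of i] sin_succ_multiple_pos[of i]
  by (auto intro!: divide_pos_pos add_pos_pos)

lemma cap1Link_sine_nodes:
  assumes "\<And>i. i \<in> {1..k} \<Longrightarrow> l (2*i) = sine_l \<theta> i \<and> l (2*i+1) = sine_l \<theta> i"
    and "\<And>i. i \<in> {1..k} \<Longrightarrow> r (2*i) = sine_r \<theta> i \<and> r (2*i+1) = sine_r \<theta> i"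
    and "j \<in> {2..2*k+1}"
  shows "cap1Link (l j) (r j) = 1"
proof -
  have "j \<in> {1..2*k+1}" "j \<noteq> 1" using assms(3) by auto
  then obtain i where i: "i \<in> {1..k}" "j = 2*i \<or> j = 2*i+1" using node_cases by blast
  have "cap1Link (sine_l \<theta> i) (sine_r \<theta> i) = 1"
    unfolding sine_l_def sine_r_def using sin_multiple_pos[of i] sin_succ_multiple_pos[of i] i(1)
    by (auto intro!: cap1Link_sum_div)
  then show ?thesis using assms(1,2) i by auto
qed

lemma sine_l_last: "sine_l \<theta> k = 2 + 2 * cos \<theta>"
proof -
  define x where "x = (real k + 1) * \<theta>"
  have "x + \<theta> = 2 * pi - x" using \<theta> unfolding x_def by (simp add: field_simps)
  then have "sin (x + \<theta>) = - sin x" by (metis sin_2pi_minus)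
  moreover have k: "real k * \<theta> = x - \<theta>" unfolding x_def by (simp add: algebra_simps)
  ultimately have "sin (real k * \<theta>) = (2 * cos \<theta> + 1) * sin x"
    unfolding k using sin_diff_add_sin_add[of x \<theta>] by (simp add: algebra_simps)
  moreover have "0 < sin x" using sin_succ_multiple_pos[OF order_refl] unfolding x_def .
  ultimately show ?thesis unfolding sine_l_def x_def[symmetric] by (simp add: field_simps)
qed

lemma zigzag_network_sine:
  assumes "1 \<le> k" "l 1 = 1" "0 \<le> r 1"
    and "\<And>i. i \<in> {1..k} \<Longrightarrow> l (2*i) = sine_l \<theta> i \<and> l (2*i+1) = sine_l \<theta> i"
    and "\<And>i. i \<in> {1..k} \<Longrightarrow> r (2*i) = sine_r \<theta> i \<and> r (2*i+1) = sine_r \<theta> i"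
  shows "zigzag_network k (sine_l \<theta>) (sine_r \<theta>) (2 + 2 * cos \<theta>) l r"
proof
  show "l 1 = sine_l \<theta> 0" using sine_l_0 sin_succ_multiple_pos[of 0] assms(2) by simp
  show "sine_l \<theta> j + sine_r \<theta> (Suc j) = 2 + 2 * cos \<theta>" if "j < k" for j
    using sine_l_add_sine_r_Suc sin_succ_multiple_pos[of j] that by simp
  show "0 \<le> sine_l \<theta> i" if "i \<le> k" for i using sine_l_pos[OF that] by simp
  show "0 \<le> sine_r \<theta> i" if "i \<in> {1..k}" for i using sine_r_pos[OF that] by simp
qed (use assms sine_l_last in auto)

end

theorem mainTheorem8:
  fixes n k :: nat and \<theta> :: real and l :: "nat \<Rightarrow> real" and r :: "real \<Rightarrow> nat \<Rightarrow> real"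
  assumes hn: "n = 2 * k + 1" and hk: "k \<ge> 1"
    and h\<theta>: "\<theta> = 2 * pi / (real n + 2)"
    and hl1: "l 1 = 1"
    and hr1: "\<And>L. L > 0 \<Longrightarrow> r L 1 = L"
    and hl: "\<And>i. i \<in> {1..k} \<Longrightarrow>
        l (2*i) = (sin (i*\<theta>) + sin ((i+1)*\<theta>)) / sin ((i+1)*\<theta>) \<and>
        l (2*i+1) = (sin (i*\<theta>) + sin ((i+1)*\<theta>)) / sin ((i+1)*\<theta>)"
    and hr: "\<And>L i. L > 0 \<Longrightarrow> i \<in> {1..k} \<Longrightarrow>
        r L (2*i) = (sin (i*\<theta>) + sin ((i+1)*\<theta>)) / sin (i*\<theta>) \<and>
        r L (2*i+1) = (sin (i*\<theta>) + sin ((i+1)*\<theta>)) / sin (i*\<theta>)"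
  shows "(\<forall>L>0. \<forall>j\<in>{2..n}. cap1Link (l j) (r L j) = 1)
       \<and> (\<forall>L>0. cap1 n l (r L) = 1)
       \<and> l n = 2 + 2 * cos \<theta>
       \<and> (\<forall>L>0. capN n l (r L) \<le> l n)
       \<and> ((\<lambda>L. capN n l (r L)) \<longlongrightarrow> 2 + 2 * cos \<theta>) at_top
       \<and> ((\<lambda>L. cap1 n l (r L) / capN n l (r L)) \<longlongrightarrow> 1 / (2 + 2 * cos (2 * pi / (real n + 2)))) at_top"
proof -
  have \<theta>: "\<theta> = 2 * pi / (2 * real k + 3)" using h\<theta> hn by simp
  have l_pairs: "\<And>i. i \<in> {1..k} \<Longrightarrow> l (2*i) = sine_l \<theta> i \<and> l (2*i+1) = sine_l \<theta> i"
    using hl unfolding sine_l_def .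
  have r_pairs: "\<And>L i. 0 < L \<Longrightarrow> i \<in> {1..k} \<Longrightarrow>
      r L (2*i) = sine_r \<theta> i \<and> r L (2*i+1) = sine_r \<theta> i"
    using hr unfolding sine_r_def .
  have net: "zigzag_network k (sine_l \<theta>) (sine_r \<theta>) (2 + 2 * cos \<theta>) l (r L)" if "0 < L" for L
    using zigzag_network_sine[OF \<theta> hk hl1 _ l_pairs r_pairs[OF that]] hr1 that by simp
  have links: "cap1Link (l j) (r L j) = 1" if "0 < L" "j \<in> {2..n}" for L j
    using cap1Link_sine_nodes[OF \<theta> l_pairs r_pairs[OF that(1)]] that(2) hn by blast
  have cap1: "cap1 n l (r L) = 1" if "0 < L" for L
    using that hn hk hl1 hr1[OF that] by (intro cap1_eq_1 links) (auto simp: cap1Link_def)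
  have l_n: "l n = 2 + 2 * cos \<theta>" "0 < l n"
    using l_pairs[of k] hk hn sine_l_last[OF \<theta>] sine_l_pos[OF \<theta>, of k] by auto
  have capN: "((\<lambda>L. capN n l (r L)) \<longlongrightarrow> 2 + 2 * cos \<theta>) at_top"
    using tendsto_capN_zigzag[OF net hr1] hn by simp
  have "((\<lambda>L. 1 / capN n l (r L)) \<longlongrightarrow> 1 / (2 + 2 * cos \<theta>)) at_top"
    using capN l_n by (intro tendsto_intros) auto
  moreover have "\<forall>\<^sub>F L in at_top. 1 / capN n l (r L) = cap1 n l (r L) / capN n l (r L)"
    using eventually_gt_at_top[of 0] by eventually_elim (use cap1 in auto)
  ultimately have ratio: "((\<lambda>L. cap1 n l (r L) / capN n l (r L)) \<longlongrightarrow> 1 / (2 + 2 * cos \<theta>)) at_top"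
    by (rule Lim_transform_eventually)
  show ?thesis
    using links cap1 l_n capN ratio zigzag_network.capN_le_c[OF net] hn h\<theta> by auto
qed

end
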